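(* Let $J$ be a probability space, $(W^{(n)})_n$ a sequence of graphons on $J$ and $W$ a graphon on $J$ with $\|W^{(n)}-W\|_{\infty\to1}\to0$. Let $u^{(n)}(0)\in L^1(J)$ converge to $u(0)\in L^1(J)$ in $L^1$. Let $u^{(n)}(t)$ and $u(t)$ be the solutions of the Kuramoto graphon systems $\dot u_x=\int_J W^{(n)}(x,y)\sin(u_y-u_x)\,d\mu(y)$ and $\dot u_x=\int_J W(x,y)\sin(u_y-u_x)\,d\mu(y)$ with these initial conditions. Then for every $t\in\mathbb{R}$, $\lim_{n\to\infty}\|u^{(n)}(t)-u(t)\|_1=0$, and the convergence is uniform in $t$ on every compact interval $[-T,T]$.
   Context: A graphon on $J=(\Omega,\mathcal A,\mu)$ is a symmetric measurable function $\Omega\times\Omega\to[0,1]$. $\|K\|_{\infty\to1}=\sup_{\|h\|_{L^\infty}\le1}\int_J\big|\int_J K(x,y)h(y)\,d\mu(y)\big|\,d\mu(x)$. *)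

theory Defs
  imports "HOL-Probability.Probability"
begin

definition graphon :: "'a measure \<Rightarrow> ('a \<Rightarrow> 'a \<Rightarrow> real) \<Rightarrow> bool" where
  "graphon M W \<longleftrightarrow>
     (\<lambda>(x, y). W x y) \<in> borel_measurable (M \<Otimes>\<^sub>M M) \<and>
     (\<forall>x\<in>space M. \<forall>y\<in>space M. W x y = W y x) \<and>
     (\<forall>x\<in>space M. \<forall>y\<in>space M. 0 \<le> W x y \<and> W x y \<le> 1)"

definition norm_inf_1 :: "'a measure \<Rightarrow> ('a \<Rightarrow> 'a \<Rightarrow> real) \<Rightarrow> real" where
  "norm_inf_1 M K =
     (SUP h\<in>{h. h \<in> borel_measurable M \<and> (AE y in M. \<bar>h y\<bar> \<le> 1)}.
        \<integral>x. \<bar>\<integral>y. K x y * h y \<partial>M\<bar> \<partial>M)"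

definition l1_dist :: "'a measure \<Rightarrow> ('a \<Rightarrow> real) \<Rightarrow> ('a \<Rightarrow> real) \<Rightarrow> real" where
  "l1_dist M f g = (\<integral>x. \<bar>f x - g x\<bar> \<partial>M)"

definition kuramoto_rhs :: "'a measure \<Rightarrow> ('a \<Rightarrow> 'a \<Rightarrow> real) \<Rightarrow> ('a \<Rightarrow> real) \<Rightarrow> 'a \<Rightarrow> real" where
  "kuramoto_rhs M W v x = (\<integral>y. W x y * sin (v y - v x) \<partial>M)"

text \<open>u is a solution (a differentiable curve t maps to u t in L1(J), defined for all
  real t) of the Kuramoto graphon system with kernel W and initial condition u0.\<close>
definition kuramoto_solution ::
  "'a measure \<Rightarrow> ('a \<Rightarrow> 'a \<Rightarrow> real) \<Rightarrow> ('a \<Rightarrow> real) \<Rightarrow> (real \<Rightarrow> 'a \<Rightarrow> real) \<Rightarrow> bool" where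
  "kuramoto_solution M W u0 u \<longleftrightarrow>
     (\<forall>t. integrable M (u t)) \<and>
     (AE x in M. u 0 x = u0 x) \<and>
     (\<forall>t. ((\<lambda>h. l1_dist M (\<lambda>x. (u (t + h) x - u t x) / h) (kuramoto_rhs M W (u t)))
            \<longlongrightarrow> 0) (at 0))"

end

theory Submission
  imports Defs
begin

text \<open>The L1 distance e(t) between two solutions need not be differentiable, but the
  difference quotients of both solutions converge in L1 to the respective right-hand sides.
  The right-hand side is 2-Lipschitz in the state (sin is 1-Lipschitz and the kernel is
  bounded by 1), and changing the kernel moves it by at most twice the L-infinity to L1
  norm of the difference. Hence f = e + \<delta>, with \<delta> that norm, satisfies
  |f(t+h) - f(t)| \<le> |h| (2 f(t) + \<epsilon>) for small h, and a derivative-free Gronwall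
  argument gives e(t) \<le> (e(0) + \<delta>) exp(3|t|). Along the sequence both e(0) and \<delta>
  tend to zero, which gives convergence uniformly for |t| \<le> T.\<close>

lemma isCont_if_eventually_diff_le:
  fixes f :: "real \<Rightarrow> real"
  assumes "\<forall>\<^sub>F h in at 0. \<bar>f (t + h) - f t\<bar> \<le> \<bar>h\<bar> * C"
  shows "isCont f t"
proof -
  have "\<forall>\<^sub>F h in at 0. norm (f (t + h) - f t) \<le> \<bar>h\<bar> * C"
    using assms by simp
  moreover have "((\<lambda>h. \<bar>h\<bar> * C) \<longlongrightarrow> 0) (at 0)"
    using tendsto_mult_left_zero[OF tendsto_rabs_zero[OF tendsto_ident_at]] .
  ultimately have "((\<lambda>h. f (t + h) - f t) \<longlongrightarrow> 0) (at 0)"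
    by (rule Lim_null_comparison)
  then show ?thesis
    unfolding isCont_iff by (simp add: LIM_zero_iff)
qed

lemma eventually_exp_neg_less_linear:
  fixes c L :: real
  assumes "c < L"
  shows "\<forall>\<^sub>F h in at_right 0. exp (- L * h) < 1 - c * h"
proof -
  have "((\<lambda>h. exp (- L * h)) has_real_derivative - L) (at 0)"
    by (auto intro!: derivative_eq_intros)
  then have "((\<lambda>h. (exp (- L * h) - 1) / h) \<longlongrightarrow> - L) (at 0)"
    by (simp add: has_field_derivative_iff)
  then have "((\<lambda>h. (exp (- L * h) - 1) / h) \<longlongrightarrow> - L) (at_right 0)"
    by (rule tendsto_mono[OF at_le[OF subset_UNIV]])
  moreover have "- L < - c" using assms by simp
  ultimately have "\<forall>\<^sub>F h in at_right 0. (exp (- L * h) - 1) / h < - c"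
    by (rule order_tendstoD)
  with eventually_at_right_less[of "0::real"] show ?thesis
    by eventually_elim (simp add: field_simps)
qed

lemma gronwall_local_forward:
  fixes f :: "real \<Rightarrow> real" and L L' :: real
  assumes nonneg: "\<And>t. 0 \<le> f t" and "L < L'"
    and local: "\<And>t \<epsilon>. \<epsilon> > 0 \<Longrightarrow> \<forall>\<^sub>F h in at 0. \<bar>f (t + h) - f t\<bar> \<le> \<bar>h\<bar> * (L * f t + \<epsilon>)"
    and "0 \<le> t"
  shows "f t \<le> f 0 * exp (L' * t)"
proof -
  have cont: "continuous_on UNIV f"
    using local[of 1] by (intro continuous_at_imp_continuous_on ballI isCont_if_eventually_diff_le) simp
  have slack: "f t \<le> (f 0 + \<eta>) * exp (L' * t)" if "\<eta> > 0" for \<eta>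
  proof (rule ccontr)
    assume bad: "\<not> ?thesis"
    define G where "G r = (f 0 + \<eta>) * exp (L' * r)" for r
    define S where "S = {r. G r \<le> f r} \<inter> {0..}"
    have "closed S"
      unfolding S_def G_def by (intro closed_Int closed_Collect_le cont continuous_intros)
    moreover have "t \<in> S" using bad \<open>0 \<le> t\<close> by (simp add: S_def G_def)
    moreover have "bdd_below S" by (auto simp: S_def bdd_below_def)
    ultimately have "Inf S \<in> S" by (intro closed_contains_Inf) auto
    define s where "s = Inf S"
    \<comment> \<open>At the first time s where f reaches G, the estimate looking back from s only allows
      f to fall at rate c < L', the rate of G, so f is already above G just before s.\<close>
    have "G s \<le> f s" "0 \<le> s" using \<open>Inf S \<in> S\<close> by (auto simp: S_def s_def)
    have "s \<noteq> 0" using \<open>G s \<le> f s\<close> \<open>\<eta> > 0\<close> by (auto simp: G_def)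
    have below: "f r < G r" if "0 \<le> r" "r < s" for r
    proof (rule ccontr)
      assume "\<not> f r < G r"
      then have "r \<in> S" using that by (simp add: S_def)
      then have "s \<le> r" unfolding s_def using \<open>bdd_below S\<close> by (rule cInf_lower)
      then show False using that by simp
    qed
    have "G s > 0" using nonneg[of 0] \<open>\<eta> > 0\<close> by (simp add: G_def)
    define c where "c = (L + L') / 2"
    have "L * f s + (L' - L) / 2 * f s = c * f s"
      unfolding c_def by (simp add: field_simps)
    then have "\<forall>\<^sub>F h in at 0. \<bar>f (s + h) - f s\<bar> \<le> \<bar>h\<bar> * (c * f s)"
      using local[of "(L' - L) / 2 * f s" s] \<open>G s > 0\<close> \<open>G s \<le> f s\<close> \<open>L < L'\<close> by auto
    then have "\<forall>\<^sub>F h in at_left 0. \<bar>f (s + h) - f s\<bar> \<le> \<bar>h\<bar> * (c * f s)"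
      by (rule filter_leD[OF at_le[OF subset_UNIV]])
    then have "\<forall>\<^sub>F h in at_right 0. \<bar>f (s - h) - f s\<bar> \<le> \<bar>h\<bar> * (c * f s)"
      unfolding at_left_minus eventually_filtermap by simp
    moreover have "\<forall>\<^sub>F h in at_right 0. 0 < h \<and> h < s"
      using \<open>0 \<le> s\<close> \<open>s \<noteq> 0\<close> eventually_at_right_less
      by (intro eventually_conj order_tendstoD(2)[OF tendsto_ident_at]) auto
    moreover have "\<forall>\<^sub>F h in at_right 0. exp (- L' * h) < 1 - c * h"
      using \<open>L < L'\<close> by (intro eventually_exp_neg_less_linear) (simp add: c_def)
    ultimately have "\<forall>\<^sub>F h in at_right 0.
        \<bar>f (s - h) - f s\<bar> \<le> \<bar>h\<bar> * (c * f s) \<and> 0 < h \<and> h < s \<and> exp (- L' * h) < 1 - c * h"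
      by eventually_elim auto
    then obtain h where h: "\<bar>f (s - h) - f s\<bar> \<le> \<bar>h\<bar> * (c * f s)" "0 < h" "h < s"
      "exp (- L' * h) < 1 - c * h"
      using eventually_happens'[OF trivial_limit_at_right_real] by blast
    have "G (s - h) = G s * exp (- L' * h)"
      by (simp add: G_def right_diff_distrib exp_diff exp_minus divide_inverse)
    also have "\<dots> < G s * (1 - c * h)"
      using \<open>G s > 0\<close> h(4) by simp
    also have "\<dots> \<le> f s * (1 - c * h)"
    proof (rule mult_right_mono[OF \<open>G s \<le> f s\<close>])
      show "0 \<le> 1 - c * h" using h(4) exp_gt_zero[of "- L' * h"] by linarith
    qed
    also have "\<dots> \<le> f (s - h)"
      using h(1,2) by (simp add: abs_le_iff algebra_simps)
    finally show False
      using below[of "s - h"] h by simp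
  qed
  show ?thesis
  proof (rule field_le_epsilon)
    fix \<epsilon> :: real assume "\<epsilon> > 0"
    then have "f t \<le> (f 0 + \<epsilon> / exp (L' * t)) * exp (L' * t)"
      by (intro slack) simp
    then show "f t \<le> f 0 * exp (L' * t) + \<epsilon>"
      by (simp add: distrib_right)
  qed
qed

lemma gronwall_local:
  fixes f :: "real \<Rightarrow> real" and L L' :: real
  assumes nonneg: "\<And>t. 0 \<le> f t" and "L < L'"
    and local: "\<And>t \<epsilon>. \<epsilon> > 0 \<Longrightarrow> \<forall>\<^sub>F h in at 0. \<bar>f (t + h) - f t\<bar> \<le> \<bar>h\<bar> * (L * f t + \<epsilon>)"
  shows "f t \<le> f 0 * exp (L' * \<bar>t\<bar>)"
proof (cases "0 \<le> t")
  case True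
  then show ?thesis
    using gronwall_local_forward[OF nonneg \<open>L < L'\<close> local] by simp
next
  case False
  have "f (- (- t)) \<le> f (- 0) * exp (L' * (- t))"
  proof (rule gronwall_local_forward[where f = "\<lambda>s. f (- s)", OF nonneg \<open>L < L'\<close>])
    fix s \<epsilon> :: real assume "\<epsilon> > 0"
    then have "\<forall>\<^sub>F h in filtermap uminus (at 0). \<bar>f (- s + h) - f (- s)\<bar> \<le> \<bar>h\<bar> * (L * f (- s) + \<epsilon>)"
      unfolding filtermap_at_minus minus_zero by (rule local)
    then show "\<forall>\<^sub>F h in at 0. \<bar>f (- (s + h)) - f (- s)\<bar> \<le> \<bar>h\<bar> * (L * f (- s) + \<epsilon>)"
      by (simp add: eventually_filtermap algebra_simps)
  qed (use False in simp)
  then show ?thesis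
    using False by simp
qed

lemma uniform_convergence_if_exp_bound:
  fixes e :: "nat \<Rightarrow> real \<Rightarrow> real" and c :: "nat \<Rightarrow> real"
  assumes nonneg: "\<And>n t. 0 \<le> e n t" and bound: "\<And>n t. e n t \<le> c n * exp (K * \<bar>t\<bar>)"
    and "c \<longlonglongrightarrow> 0" and "0 \<le> K" and "\<epsilon> > 0"
  shows "\<exists>N. \<forall>n\<ge>N. \<forall>t\<in>{-T..T}. e n t < \<epsilon>"
proof -
  obtain N where N: "\<And>n. n \<ge> N \<Longrightarrow> c n < \<epsilon> / exp (K * \<bar>T\<bar>)"
    using order_tendstoD(2)[OF \<open>c \<longlonglongrightarrow> 0\<close>, of "\<epsilon> / exp (K * \<bar>T\<bar>)"] \<open>\<epsilon> > 0\<close>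
    by (auto simp: eventually_sequentially)
  have "e n t < \<epsilon>" if "n \<ge> N" "t \<in> {-T..T}" for n t
  proof -
    have "0 \<le> c n"
      using bound[of n 0] nonneg[of n 0] by simp
    have "exp (K * \<bar>t\<bar>) \<le> exp (K * \<bar>T\<bar>)"
      using that(2) \<open>0 \<le> K\<close> by (simp add: abs_le_iff mult_left_mono)
    then have "e n t \<le> c n * exp (K * \<bar>T\<bar>)"
      using bound[of n t] mult_left_mono[OF _ \<open>0 \<le> c n\<close>] by (blast intro: order_trans)
    also have "\<dots> < \<epsilon>"
      using N[OF that(1)] by (simp add: field_simps)
    finally show ?thesis .
  qed
  then show ?thesis by blast
qed

lemma l1_dist_nonneg: "0 \<le> l1_dist M f g"
  unfolding l1_dist_def by simp

lemma l1_dist_commute: "l1_dist M f g = l1_dist M g f"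
  unfolding l1_dist_def by (simp add: abs_minus_commute)

lemma l1_dist_triangle:
  fixes f g k :: "'a \<Rightarrow> real"
  assumes "integrable M f" "integrable M g" "integrable M k"
  shows "l1_dist M f k \<le> l1_dist M f g + l1_dist M g k"
proof -
  have "l1_dist M f k \<le> (\<integral>x. \<bar>f x - g x\<bar> + \<bar>g x - k x\<bar> \<partial>M)"
    unfolding l1_dist_def using assms by (intro integral_mono) auto
  also have "\<dots> = l1_dist M f g + l1_dist M g k"
    unfolding l1_dist_def using assms by (intro Bochner_Integration.integral_add) auto
  finally show ?thesis .
qed

lemma l1_dist_add_scaled_le:
  fixes f g p q :: "'a \<Rightarrow> real"
  assumes "integrable M f" "integrable M g" "integrable M p" "integrable M q"
  shows "\<bar>l1_dist M (\<lambda>x. f x + h * p x) (\<lambda>x. g x + h * q x) - l1_dist M f g\<bar> \<le> \<bar>h\<bar> * l1_dist M p q"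
proof -
  have "\<bar>l1_dist M (\<lambda>x. f x + h * p x) (\<lambda>x. g x + h * q x) - l1_dist M f g\<bar>
      = \<bar>\<integral>x. \<bar>f x - g x + h * (p x - q x)\<bar> - \<bar>f x - g x\<bar> \<partial>M\<bar>"
    unfolding l1_dist_def using assms
    by (subst Bochner_Integration.integral_diff) (auto simp: algebra_simps)
  also have "\<dots> \<le> (\<integral>x. \<bar>\<bar>f x - g x + h * (p x - q x)\<bar> - \<bar>f x - g x\<bar>\<bar> \<partial>M)"
    by (rule integral_abs_bound)
  also have "\<dots> \<le> (\<integral>x. \<bar>h\<bar> * \<bar>p x - q x\<bar> \<partial>M)"
  proof (rule integral_mono)
    fix x
    show "\<bar>\<bar>f x - g x + h * (p x - q x)\<bar> - \<bar>f x - g x\<bar>\<bar> \<le> \<bar>h\<bar> * \<bar>p x - q x\<bar>"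
      using abs_triangle_ineq3[of "f x - g x + h * (p x - q x)" "f x - g x"] by (simp add: abs_mult)
  qed (use assms in auto)
  also have "\<dots> = \<bar>h\<bar> * l1_dist M p q"
    unfolding l1_dist_def by simp
  finally show ?thesis .
qed

lemma l1_dist_cong_AE:
  assumes "f \<in> borel_measurable M" "f' \<in> borel_measurable M" "g \<in> borel_measurable M" "g' \<in> borel_measurable M"
    and "AE x in M. f x = f' x" "AE x in M. g x = g' x"
  shows "l1_dist M f g = l1_dist M f' g'"
  unfolding l1_dist_def using assms(5,6) by (intro integral_cong_AE) (use assms(1-4) in auto)

lemma graphon_measurable_section:
  assumes "graphon M W" "x \<in> space M"
  shows "W x \<in> borel_measurable M"
  using measurable_compose[OF measurable_Pair1'[OF assms(2)], of "\<lambda>(x, y). W x y"] assms(1)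
  by (simp add: graphon_def)

lemma graphon_measurable_fst_snd:
  "graphon M W \<Longrightarrow> (\<lambda>z. W (fst z) (snd z)) \<in> borel_measurable (M \<Otimes>\<^sub>M M)"
  by (simp add: graphon_def case_prod_beta')

lemma graphon_abs_diff_le_1:
  "graphon M W1 \<Longrightarrow> graphon M W2 \<Longrightarrow> x \<in> space M \<Longrightarrow> y \<in> space M \<Longrightarrow> \<bar>W1 x y - W2 x y\<bar> \<le> 1"
  unfolding graphon_def by (simp add: abs_le_iff) (smt (verit))

lemma abs_sin_diff_le: "\<bar>sin a - sin b\<bar> \<le> \<bar>a - b\<bar>" for a b :: real
proof -
  have "\<bar>sin a - sin b\<bar> = 2 * \<bar>sin ((a - b) / 2)\<bar> * \<bar>cos ((a + b) / 2)\<bar>"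
    by (simp add: sin_diff_sin abs_mult)
  also have "\<dots> \<le> 2 * \<bar>(a - b) / 2\<bar> * 1"
    by (intro mult_mono abs_sin_x_le_abs_x) auto
  finally show ?thesis by simp
qed

context prob_space
begin

lemma abs_integral_le_const:
  fixes g :: "'a \<Rightarrow> real"
  assumes "AE x in M. \<bar>g x\<bar> \<le> B"
  shows "\<bar>\<integral>x. g x \<partial>M\<bar> \<le> B"
proof -
  have "AE x in M. 0 \<le> B"
    using assms by eventually_elim (rule order_trans[OF abs_ge_zero])
  then have "0 \<le> B" by simp
  have "\<bar>\<integral>x. g x \<partial>M\<bar> \<le> (\<integral>x. \<bar>g x\<bar> \<partial>M)"
    by (rule integral_abs_bound)
  also have "\<dots> \<le> (\<integral>x. B \<partial>M)"
    using assms \<open>0 \<le> B\<close> by (intro integral_mono_AE') auto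
  finally show ?thesis by (simp add: prob_space)
qed

lemma integrable_bounded_mult:
  fixes k g :: "'a \<Rightarrow> real"
  assumes "k \<in> borel_measurable M" "g \<in> borel_measurable M"
    and "\<And>y. y \<in> space M \<Longrightarrow> \<bar>k y\<bar> \<le> B" "\<And>y. y \<in> space M \<Longrightarrow> \<bar>g y\<bar> \<le> 1"
  shows "integrable M (\<lambda>y. k y * g y)"
proof (rule integrable_const_bound[where B = B])
  show "AE y in M. norm (k y * g y) \<le> B"
    using mult_mono'[OF assms(3,4)] by (intro AE_I2) (simp add: abs_mult)
qed (use assms(1,2) in simp)

lemma kuramoto_rhs_abs_le_1:
  assumes "graphon M W" "x \<in> space M"
  shows "\<bar>kuramoto_rhs M W v x\<bar> \<le> 1"
  unfolding kuramoto_rhs_def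
proof (rule abs_integral_le_const[OF AE_I2])
  fix y assume "y \<in> space M"
  with assms have "\<bar>W x y\<bar> \<le> 1" by (simp add: graphon_def)
  then show "\<bar>W x y * sin (v y - v x)\<bar> \<le> 1"
    using mult_mono'[OF \<open>\<bar>W x y\<bar> \<le> 1\<close> abs_sin_le_one[of "v y - v x"]] by (simp add: abs_mult)
qed

lemma measurable_kuramoto_rhs:
  assumes "graphon M W" "v \<in> borel_measurable M"
  shows "kuramoto_rhs M W v \<in> borel_measurable M"
proof -
  note [measurable] = graphon_measurable_fst_snd[OF assms(1)] assms(2)
  have "(\<lambda>(x, y). W x y * sin (v y - v x)) \<in> borel_measurable (M \<Otimes>\<^sub>M M)"
    unfolding case_prod_beta' by measurable
  then show ?thesis
    unfolding kuramoto_rhs_def by (rule borel_measurable_lebesgue_integral)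
qed

lemma integrable_kuramoto_rhs:
  assumes "graphon M W" "v \<in> borel_measurable M"
  shows "integrable M (kuramoto_rhs M W v)"
  using kuramoto_rhs_abs_le_1[OF assms(1)] measurable_kuramoto_rhs[OF assms]
  by (intro integrable_const_bound[where B = 1]) auto

lemma norm_inf_1_upper:
  fixes K :: "'a \<Rightarrow> 'a \<Rightarrow> real"
  assumes K: "\<And>x y. x \<in> space M \<Longrightarrow> y \<in> space M \<Longrightarrow> \<bar>K x y\<bar> \<le> B"
    and h: "h \<in> borel_measurable M" "AE y in M. \<bar>h y\<bar> \<le> 1"
  shows "(\<integral>x. \<bar>\<integral>y. K x y * h y \<partial>M\<bar> \<partial>M) \<le> norm_inf_1 M K"
proof -
  have bound: "(\<integral>x. \<bar>\<integral>y. K x y * g y \<partial>M\<bar> \<partial>M) \<le> B" if g: "AE y in M. \<bar>g y\<bar> \<le> 1" for g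
  proof -
    have "\<bar>\<integral>y. K x y * g y \<partial>M\<bar> \<le> B" if "x \<in> space M" for x
    proof (rule abs_integral_le_const)
      show "AE y in M. \<bar>K x y * g y\<bar> \<le> B"
        using g AE_space
      proof eventually_elim
        case (elim y)
        then show ?case
          using mult_mono'[OF K[OF \<open>x \<in> space M\<close> elim(2)] elim(1)] by (simp add: abs_mult)
      qed
    qed
    then have "\<bar>\<integral>x. \<bar>\<integral>y. K x y * g y \<partial>M\<bar> \<partial>M\<bar> \<le> B"
      by (intro abs_integral_le_const AE_I2) simp
    then show ?thesis by simp
  qed
  have "bdd_above ((\<lambda>g. \<integral>x. \<bar>\<integral>y. K x y * g y \<partial>M\<bar> \<partial>M) ` {g. g \<in> borel_measurable M \<and> (AE y in M. \<bar>g y\<bar> \<le> 1)})"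
    using bound by (intro bdd_aboveI2[where M = B]) simp
  then show ?thesis
    unfolding norm_inf_1_def by (rule cSUP_upper[rotated]) (simp add: h)
qed

lemma norm_inf_1_nonneg:
  fixes K :: "'a \<Rightarrow> 'a \<Rightarrow> real"
  assumes "\<And>x y. x \<in> space M \<Longrightarrow> y \<in> space M \<Longrightarrow> \<bar>K x y\<bar> \<le> B"
  shows "0 \<le> norm_inf_1 M K"
  using norm_inf_1_upper[OF assms, where h = "\<lambda>_. 0"] by simp

lemma kuramoto_rhs_lipschitz:
  assumes W: "graphon M W" and v: "integrable M v" and w: "integrable M w"
  shows "l1_dist M (kuramoto_rhs M W v) (kuramoto_rhs M W w) \<le> 2 * l1_dist M v w"
proof -
  note [measurable] = borel_measurable_integrable[OF v] borel_measurable_integrable[OF w]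
  have vw: "integrable M (\<lambda>y. \<bar>v y - w y\<bar>)" using v w by auto
  have pointwise: "\<bar>kuramoto_rhs M W v x - kuramoto_rhs M W w x\<bar> \<le> l1_dist M v w + \<bar>v x - w x\<bar>"
    if x: "x \<in> space M" for x
  proof -
    note [measurable] = graphon_measurable_section[OF W x]
    have W_le: "\<bar>W x y\<bar> \<le> 1" if "y \<in> space M" for y
      using W x that by (simp add: graphon_def)
    have int: "integrable M (\<lambda>y. W x y * sin (z y - z x))" if [measurable]: "z \<in> borel_measurable M" for z
      by (rule integrable_bounded_mult[where B = 1]) (simp_all add: W_le)
    have "\<bar>kuramoto_rhs M W v x - kuramoto_rhs M W w x\<bar>
        = \<bar>\<integral>y. W x y * sin (v y - v x) - W x y * sin (w y - w x) \<partial>M\<bar>"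
      unfolding kuramoto_rhs_def by (simp add: int)
    also have "\<dots> \<le> (\<integral>y. \<bar>W x y * sin (v y - v x) - W x y * sin (w y - w x)\<bar> \<partial>M)"
      by (rule integral_abs_bound)
    also have "\<dots> \<le> (\<integral>y. \<bar>v y - w y\<bar> + \<bar>v x - w x\<bar> \<partial>M)"
    proof (rule integral_mono')
      fix y assume "y \<in> space M"
      have "\<bar>W x y * sin (v y - v x) - W x y * sin (w y - w x)\<bar>
          = \<bar>W x y\<bar> * \<bar>sin (v y - v x) - sin (w y - w x)\<bar>"
        by (simp add: abs_mult flip: right_diff_distrib)
      also have "\<dots> \<le> 1 * \<bar>(v y - v x) - (w y - w x)\<bar>"
        using W_le[OF \<open>y \<in> space M\<close>] by (intro mult_mono abs_sin_diff_le) auto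
      also have "\<dots> \<le> \<bar>v y - w y\<bar> + \<bar>v x - w x\<bar>"
        by simp
      finally show "\<bar>W x y * sin (v y - v x) - W x y * sin (w y - w x)\<bar> \<le> \<bar>v y - w y\<bar> + \<bar>v x - w x\<bar>" .
    qed (use vw in auto)
    also have "\<dots> = l1_dist M v w + \<bar>v x - w x\<bar>"
      using vw by (simp add: l1_dist_def prob_space)
    finally show ?thesis .
  qed
  have "l1_dist M (kuramoto_rhs M W v) (kuramoto_rhs M W w) \<le> (\<integral>x. l1_dist M v w + \<bar>v x - w x\<bar> \<partial>M)"
    unfolding l1_dist_def[of _ "kuramoto_rhs M W v"]
    using pointwise vw by (intro integral_mono') (auto intro: add_nonneg_nonneg l1_dist_nonneg)
  also have "\<dots> = 2 * l1_dist M v w"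
    using vw by (simp add: l1_dist_def prob_space)
  finally show ?thesis .
qed

lemma kuramoto_rhs_kernel_diff:
  assumes W1: "graphon M W1" and W2: "graphon M W2" and v [measurable]: "v \<in> borel_measurable M"
  shows "l1_dist M (kuramoto_rhs M W1 v) (kuramoto_rhs M W2 v) \<le> 2 * norm_inf_1 M (\<lambda>x y. W1 x y - W2 x y)"
proof -
  define K where "K = (\<lambda>x y. W1 x y - W2 x y)"
  define T where "T g x = (\<integral>y. K x y * g (v y) \<partial>M)" for g :: "real \<Rightarrow> real" and x
  note [measurable] = graphon_measurable_fst_snd[OF W1] graphon_measurable_fst_snd[OF W2]
  have K_le: "\<bar>K x y\<bar> \<le> 1" if "x \<in> space M" "y \<in> space M" for x y
    unfolding K_def using graphon_abs_diff_le_1[OF W1 W2 that] .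
  have T_int: "integrable M (\<lambda>x. \<bar>T g x\<bar>)" and T_le: "(\<integral>x. \<bar>T g x\<bar> \<partial>M) \<le> norm_inf_1 M K"
    if [measurable]: "g \<in> borel_measurable borel" and g_le: "\<And>r. \<bar>g r\<bar> \<le> 1" for g
  proof -
    have "(\<lambda>(x, y). K x y * g (v y)) \<in> borel_measurable (M \<Otimes>\<^sub>M M)"
      unfolding K_def case_prod_beta' by measurable
    then have [measurable]: "T g \<in> borel_measurable M"
      unfolding T_def by (rule borel_measurable_lebesgue_integral)
    have "\<bar>T g x\<bar> \<le> 1" if "x \<in> space M" for x
      unfolding T_def
      using mult_mono'[OF K_le[OF that] g_le] by (intro abs_integral_le_const AE_I2) (simp add: abs_mult)
    then show "integrable M (\<lambda>x. \<bar>T g x\<bar>)"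
      by (intro integrable_const_bound[where B = 1]) auto
    show "(\<integral>x. \<bar>T g x\<bar> \<partial>M) \<le> norm_inf_1 M K"
      unfolding T_def using g_le by (intro norm_inf_1_upper[OF K_le]) auto
  qed
  \<comment> \<open>The addition formula for sin(v y - v x) separates the variables, so that the kernel
    is only tested against the bounded functions sin (v y) and cos (v y).\<close>
  have pointwise: "\<bar>kuramoto_rhs M W1 v x - kuramoto_rhs M W2 v x\<bar> \<le> \<bar>T sin x\<bar> + \<bar>T cos x\<bar>"
    if x: "x \<in> space M" for x
  proof -
    note [measurable] = graphon_measurable_section[OF W1 x] graphon_measurable_section[OF W2 x]
    have W_le: "\<bar>W x y\<bar> \<le> 1" if "graphon M W" "y \<in> space M" for W y
      using that x by (simp add: graphon_def)
    have int: "integrable M (\<lambda>y. k y * g (v y))"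
      if [measurable]: "k \<in> borel_measurable M" "g \<in> borel_measurable borel"
        and "\<And>y. y \<in> space M \<Longrightarrow> \<bar>k y\<bar> \<le> 1" "\<And>r. \<bar>g r\<bar> \<le> 1"
      for k and g :: "real \<Rightarrow> real"
      by (rule integrable_bounded_mult[where B = 1 and g = "\<lambda>y. g (v y)"]) (simp_all add: that)
    have "kuramoto_rhs M W1 v x - kuramoto_rhs M W2 v x = (\<integral>y. K x y * sin (v y - v x) \<partial>M)"
      unfolding kuramoto_rhs_def K_def left_diff_distrib
      by (intro Bochner_Integration.integral_diff[symmetric] int[of _ "\<lambda>r. sin (r - v x)"])
        (simp_all add: W_le W1 W2)
    also have "\<dots> = (\<integral>y. cos (v x) * (K x y * sin (v y)) - sin (v x) * (K x y * cos (v y)) \<partial>M)"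
      by (rule Bochner_Integration.integral_cong) (simp_all add: sin_diff algebra_simps)
    also have "\<dots> = cos (v x) * T sin x - sin (v x) * T cos x"
      unfolding T_def using K_le[OF x]
      by (subst Bochner_Integration.integral_diff) (auto intro!: int simp: K_def)
    also have "\<bar>\<dots>\<bar> \<le> \<bar>T sin x\<bar> + \<bar>T cos x\<bar>"
    proof -
      have "\<bar>cos (v x) * T sin x\<bar> \<le> \<bar>T sin x\<bar>" "\<bar>sin (v x) * T cos x\<bar> \<le> \<bar>T cos x\<bar>"
        by (simp_all add: abs_mult mult_left_le_one_le)
      then show ?thesis
        using abs_triangle_ineq4[of "cos (v x) * T sin x" "sin (v x) * T cos x"] by linarith
    qed
    finally show ?thesis .
  qed
  have "l1_dist M (kuramoto_rhs M W1 v) (kuramoto_rhs M W2 v) \<le> (\<integral>x. \<bar>T sin x\<bar> + \<bar>T cos x\<bar> \<partial>M)"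
    unfolding l1_dist_def using pointwise T_int by (intro integral_mono') auto
  also have "\<dots> = (\<integral>x. \<bar>T sin x\<bar> \<partial>M) + (\<integral>x. \<bar>T cos x\<bar> \<partial>M)"
    using T_int by (simp add: Bochner_Integration.integral_add)
  also have "\<dots> \<le> 2 * norm_inf_1 M K"
    using T_le[of sin] T_le[of cos] by simp
  finally show ?thesis
    by (simp add: K_def)
qed

lemma kuramoto_rhs_dist_le:
  assumes W1: "graphon M W1" and W2: "graphon M W2" and v: "integrable M v" and w: "integrable M w"
  shows "l1_dist M (kuramoto_rhs M W1 v) (kuramoto_rhs M W2 w)
    \<le> 2 * l1_dist M v w + 2 * norm_inf_1 M (\<lambda>x y. W1 x y - W2 x y)"
proof -
  have [measurable]: "v \<in> borel_measurable M" "w \<in> borel_measurable M"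
    using v w by auto
  have "l1_dist M (kuramoto_rhs M W1 v) (kuramoto_rhs M W2 w)
      \<le> l1_dist M (kuramoto_rhs M W1 v) (kuramoto_rhs M W1 w) + l1_dist M (kuramoto_rhs M W1 w) (kuramoto_rhs M W2 w)"
    using W1 W2 by (intro l1_dist_triangle integrable_kuramoto_rhs) simp_all
  also have "\<dots> \<le> 2 * l1_dist M v w + 2 * norm_inf_1 M (\<lambda>x y. W1 x y - W2 x y)"
    using kuramoto_rhs_lipschitz[OF W1 v w] kuramoto_rhs_kernel_diff[OF W1 W2] by (intro add_mono) simp_all
  finally show ?thesis .
qed

lemma kuramoto_solution_dist_local_estimate:
  assumes W1: "graphon M W1" and W2: "graphon M W2"
    and a: "kuramoto_solution M W1 a0 a" and b: "kuramoto_solution M W2 b0 b" and "\<epsilon> > 0"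
  shows "\<forall>\<^sub>F h in at 0. \<bar>l1_dist M (a (t + h)) (b (t + h)) - l1_dist M (a t) (b t)\<bar>
    \<le> \<bar>h\<bar> * (2 * l1_dist M (a t) (b t) + 2 * norm_inf_1 M (\<lambda>x y. W1 x y - W2 x y) + \<epsilon>)"
proof -
  define Fa where "Fa = kuramoto_rhs M W1 (a t)"
  define Fb where "Fb = kuramoto_rhs M W2 (b t)"
  define qa where "qa h = (\<lambda>x. (a (t + h) x - a t x) / h)" for h
  define qb where "qb h = (\<lambda>x. (b (t + h) x - b t x) / h)" for h
  have int_a: "integrable M (a s)" and int_b: "integrable M (b s)" for s
    using a b by (simp_all add: kuramoto_solution_def)
  have int_q: "integrable M (qa h)" "integrable M (qb h)" for h
    unfolding qa_def qb_def using int_a int_b by auto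
  have int_F: "integrable M Fa" "integrable M Fb"
    unfolding Fa_def Fb_def using W1 W2 int_a int_b by (auto intro: integrable_kuramoto_rhs)
  have "((\<lambda>h. l1_dist M (qa h) Fa) \<longlongrightarrow> 0) (at 0)"
    using a by (simp add: kuramoto_solution_def qa_def Fa_def)
  then have "\<forall>\<^sub>F h in at 0. l1_dist M (qa h) Fa < \<epsilon> / 2"
    by (rule order_tendstoD(2)) (simp add: \<open>\<epsilon> > 0\<close>)
  moreover have "((\<lambda>h. l1_dist M (qb h) Fb) \<longlongrightarrow> 0) (at 0)"
    using b by (simp add: kuramoto_solution_def qb_def Fb_def)
  then have "\<forall>\<^sub>F h in at 0. l1_dist M (qb h) Fb < \<epsilon> / 2"
    by (rule order_tendstoD(2)) (simp add: \<open>\<epsilon> > 0\<close>)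
  moreover have "\<forall>\<^sub>F h in at 0. h \<noteq> (0::real)"
    by (simp add: eventually_at_filter)
  ultimately show ?thesis
  proof eventually_elim
    case (elim h)
    have "a (t + h) = (\<lambda>x. a t x + h * qa h x)" "b (t + h) = (\<lambda>x. b t x + h * qb h x)"
      using \<open>h \<noteq> 0\<close> by (simp_all add: qa_def qb_def)
    then have "\<bar>l1_dist M (a (t + h)) (b (t + h)) - l1_dist M (a t) (b t)\<bar> \<le> \<bar>h\<bar> * l1_dist M (qa h) (qb h)"
      using int_a int_b int_q by (simp add: l1_dist_add_scaled_le)
    also have "l1_dist M (qa h) (qb h) \<le> l1_dist M (qa h) Fa + l1_dist M Fa Fb + l1_dist M Fb (qb h)"
      using l1_dist_triangle[of M "qa h" Fa "qb h"] l1_dist_triangle[of M Fa Fb "qb h"] int_q int_F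
      by simp
    also have "\<dots> \<le> 2 * l1_dist M (a t) (b t) + 2 * norm_inf_1 M (\<lambda>x y. W1 x y - W2 x y) + \<epsilon>"
      using elim kuramoto_rhs_dist_le[OF W1 W2 int_a[of t] int_b[of t]] l1_dist_commute[of M Fb "qb h"]
      by (simp add: Fa_def Fb_def)
    finally show ?case
      by (simp add: mult_left_mono)
  qed
qed

lemma kuramoto_solution_stability:
  assumes W1: "graphon M W1" and W2: "graphon M W2"
    and a: "kuramoto_solution M W1 a0 a" and b: "kuramoto_solution M W2 b0 b"
    and "a0 \<in> borel_measurable M" "b0 \<in> borel_measurable M"
  shows "l1_dist M (a t) (b t) \<le> (l1_dist M a0 b0 + norm_inf_1 M (\<lambda>x y. W1 x y - W2 x y)) * exp (3 * \<bar>t\<bar>)"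
proof -
  define \<delta> where "\<delta> = norm_inf_1 M (\<lambda>x y. W1 x y - W2 x y)"
  define f where "f s = l1_dist M (a s) (b s) + \<delta>" for s
  have "0 \<le> \<delta>"
    unfolding \<delta>_def using graphon_abs_diff_le_1[OF W1 W2] by (rule norm_inf_1_nonneg)
  have "f t \<le> f 0 * exp (3 * \<bar>t\<bar>)"
  proof (rule gronwall_local[where L = 2])
    show "0 \<le> f s" for s
      unfolding f_def using l1_dist_nonneg \<open>0 \<le> \<delta>\<close> by (rule add_nonneg_nonneg)
    show "\<forall>\<^sub>F h in at 0. \<bar>f (s + h) - f s\<bar> \<le> \<bar>h\<bar> * (2 * f s + \<epsilon>)" if "\<epsilon> > 0" for s \<epsilon>
      using kuramoto_solution_dist_local_estimate[OF W1 W2 a b that, of s]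
      by (rule eventually_mono) (simp add: f_def \<delta>_def distrib_left)
  qed simp
  also have "f 0 = l1_dist M a0 b0 + \<delta>"
    using a b assms(5,6) unfolding f_def kuramoto_solution_def
    by (intro arg_cong[where f = "\<lambda>r. r + \<delta>"] l1_dist_cong_AE) auto
  finally show ?thesis
    using \<open>0 \<le> \<delta>\<close> by (simp add: f_def \<delta>_def)
qed

end

theorem corollary6p2:
  fixes M :: "'a measure"
    and Wn :: "nat \<Rightarrow> 'a \<Rightarrow> 'a \<Rightarrow> real" and W :: "'a \<Rightarrow> 'a \<Rightarrow> real"
    and u0n :: "nat \<Rightarrow> 'a \<Rightarrow> real" and u0 :: "'a \<Rightarrow> real"
    and un :: "nat \<Rightarrow> real \<Rightarrow> 'a \<Rightarrow> real" and u :: "real \<Rightarrow> 'a \<Rightarrow> real"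
  assumes "prob_space M"
    and "\<And>n. graphon M (Wn n)"
    and "graphon M W"
    and "(\<lambda>n. norm_inf_1 M (\<lambda>x y. Wn n x y - W x y)) \<longlonglongrightarrow> 0"
    and "\<And>n. integrable M (u0n n)"
    and "integrable M u0"
    and "(\<lambda>n. l1_dist M (u0n n) u0) \<longlonglongrightarrow> 0"
    and "\<And>n. kuramoto_solution M (Wn n) (u0n n) (un n)"
    and "kuramoto_solution M W u0 u"
  shows "(\<forall>t. (\<lambda>n. l1_dist M (un n t) (u t)) \<longlonglongrightarrow> 0) \<and>
         (\<forall>T. \<forall>\<epsilon>>0. \<exists>N. \<forall>n\<ge>N. \<forall>t\<in>{-T..T}. l1_dist M (un n t) (u t) < \<epsilon>)"
proof -
  interpret prob_space M by fact
  define c where "c n = l1_dist M (u0n n) u0 + norm_inf_1 M (\<lambda>x y. Wn n x y - W x y)" for n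
  have bound: "l1_dist M (un n t) (u t) \<le> c n * exp (3 * \<bar>t\<bar>)" for n t
    unfolding c_def using assms(2,3,5,6,8,9)
    by (intro kuramoto_solution_stability) (simp_all add: borel_measurable_integrable)
  have "c \<longlonglongrightarrow> 0"
    unfolding c_def using tendsto_add[OF assms(7,4)] by simp
  then have uniform: "\<exists>N. \<forall>n\<ge>N. \<forall>t\<in>{-T..T}. l1_dist M (un n t) (u t) < \<epsilon>" if "\<epsilon> > 0" for T \<epsilon>
    using that by (intro uniform_convergence_if_exp_bound[OF l1_dist_nonneg bound]) simp_all
  have "(\<lambda>n. l1_dist M (un n t) (u t)) \<longlonglongrightarrow> 0" for t
  proof (rule LIMSEQ_I)
    fix \<epsilon> :: real assume "\<epsilon> > 0"
    then obtain N where "\<forall>n\<ge>N. \<forall>s\<in>{-\<bar>t\<bar>..\<bar>t\<bar>}. l1_dist M (un n s) (u s) < \<epsilon>"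
      using uniform by blast
    then show "\<exists>N. \<forall>n\<ge>N. norm (l1_dist M (un n t) (u t) - 0) < \<epsilon>"
      using l1_dist_nonneg[of M "un _ t" "u t"] by force
  qed
  with uniform show ?thesis by blast
qed

end
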